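(* Let $\varphi$ be a skew-morphism of a finite group $A$ of order $m$ with power function $\pi:A\to\mathbb{Z}_m$ and derived power function $\sigma_\pi$. Then for all nonnegative integers $k,k_1,k_2,q,r$: (a) $\sigma_\pi(xy,k)\equiv\sigma_\pi(y,\sigma_\pi(x,k))\pmod m$ for all $x,y\in A$; (b) $\sigma_\pi(x,k)\equiv0\pmod m$ for all $x\in A$ if and only if $m\mid k$; (c) $\sigma_\pi(x,mq+r)\equiv\sigma_\pi(x,r)\pmod m$ for all $x\in A$; (d) $\sigma_\pi(x,k_1)\equiv\sigma_\pi(x,k_2)\pmod m$ for all $x\in A$ if and only if $k_1\equiv k_2\pmod m$.
   Context: A skew-morphism of a finite group $A$ is a permutation $\varphi$ of $A$ with $\varphi(1_A)=1_A$ for which there is a function $\pi:A\to\mathbb{Z}_m$, $m$ the order of $\varphi$ as a permutation, such that $\varphi(xy)=\varphi(x)\varphi^{\pi(x)}(y)$ for all $x,y\in A$ ($\pi$ is the power function). The derived power function is $\sigma_\pi(x,0)=0$ and $\sigma_\pi(x,k)=\sum_{i=1}^{k}\pi(\varphi^{i-1}(x))$ (computed in $\mathbb{Z}_m$) for $k>0$; in (a) the inner value $\sigma_\pi(x,k)\in\mathbb{Z}_m$ is used as second argument via any nonnegative integer representative. *)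

theory Defs
  imports "HOL-Algebra.Group" "HOL-Number_Theory.Cong"
begin

definition perm_order :: "('a, 'b) monoid_scheme \<Rightarrow> ('a \<Rightarrow> 'a) \<Rightarrow> nat" where
  "perm_order G phi = (LEAST n. 0 < n \<and> (\<forall>x \<in> carrier G. (phi ^^ n) x = x))"

text \<open>phi is a skew-morphism of the finite group G with power function pi;
  values of pi in Z_m (m the order of phi) are represented by 0..m-1.\<close>
definition skew_morphism ::
  "('a, 'b) monoid_scheme \<Rightarrow> ('a \<Rightarrow> 'a) \<Rightarrow> ('a \<Rightarrow> nat) \<Rightarrow> bool" where
  "skew_morphism G phi pi \<longleftrightarrow>
     group G \<and> finite (carrier G) \<and>
     bij_betw phi (carrier G) (carrier G) \<and>
     phi \<one>\<^bsub>G\<^esub> = \<one>\<^bsub>G\<^esub> \<and>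
     (\<forall>x \<in> carrier G. pi x < perm_order G phi) \<and>
     (\<forall>x \<in> carrier G. \<forall>y \<in> carrier G.
        phi (x \<otimes>\<^bsub>G\<^esub> y) = phi x \<otimes>\<^bsub>G\<^esub> (phi ^^ pi x) y)"

text \<open>Derived power function sigma(x,k) = sum_{i=1..k} pi(phi^(i-1) x),
  as a natural number (its class mod m is the value in Z_m).\<close>
definition derived_power :: "('a \<Rightarrow> 'a) \<Rightarrow> ('a \<Rightarrow> nat) \<Rightarrow> 'a \<Rightarrow> nat \<Rightarrow> nat" where
  "derived_power phi pi x k = (\<Sum>i = 1..k. pi ((phi ^^ (i - 1)) x))"

end

theory Submission
  imports Defs
begin

text \<open>Iterating the defining identity gives \<open>\<phi>\<^sup>k(xy) = \<phi>\<^sup>k(x) \<phi>\<^bsup>\<sigma>(x,k)\<^esup>(y)\<close>.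
  Since \<open>\<phi>\<^sup>a\<close> and \<open>\<phi>\<^sup>b\<close> agree on \<open>A\<close> exactly when \<open>a \<equiv> b (mod m)\<close>, cancelling in the
  group turns identities between such products into congruences between values of \<open>\<sigma>\<close>.
  For \<open>x = 1\<close> this gives \<open>\<sigma>(1,k) \<equiv> k\<close>, hence (d), from which (b) and (c) follow;
  expanding \<open>\<phi>\<^sup>k(xyz)\<close> in the two ways allowed by associativity gives (a).\<close>

lemma funpow_eq_on_iff_fixes_diff:
  assumes "bij_betw f A A" and "a \<le> b"
  shows "(\<forall>x \<in> A. (f ^^ a) x = (f ^^ b) x) \<longleftrightarrow> (\<forall>x \<in> A. (f ^^ (b - a)) x = x)"
proof -
  have bij_a: "bij_betw (f ^^ a) A A" and closed: "\<And>x. x \<in> A \<Longrightarrow> (f ^^ (b - a)) x \<in> A"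
    using assms(1) bij_betw_funpow bij_betwE by blast+
  have split: "(f ^^ b) x = (f ^^ a) ((f ^^ (b - a)) x)" for x
    using assms(2) by (metis funpow_add le_add_diff_inverse o_apply)
  show ?thesis
    using bij_a closed by (auto simp: split bij_betw_def inj_on_eq_iff)
qed

lemma funpow_periodic_on_finite:
  assumes "bij_betw f A A" and "finite A"
  obtains n where "0 < n" and "\<forall>x \<in> A. (f ^^ n) x = x"
proof -
  let ?r = "\<lambda>n. restrict (f ^^ n) A"
  have "?r n \<in> A \<rightarrow>\<^sub>E A" for n
    using bij_betwE[OF bij_betw_funpow[OF assms(1)]] by auto
  then have "range ?r \<subseteq> A \<rightarrow>\<^sub>E A"
    by blast
  then have "finite (range ?r)"
    using finite_PiE[of A "\<lambda>_. A"] assms(2) finite_subset by blast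
  then have "\<not> inj ?r"
    using finite_imageD infinite_UNIV_nat by blast
  then obtain a b where "a \<noteq> b" and "?r a = ?r b"
    unfolding inj_def by blast
  then obtain a b where "a < b" and "?r a = ?r b"
    by (metis linorder_neqE_nat)
  then have "\<forall>x \<in> A. (f ^^ a) x = (f ^^ b) x"
    by (metis restrict_apply')
  with \<open>a < b\<close> show thesis
    using that[of "b - a"] funpow_eq_on_iff_fixes_diff[OF assms(1), of a b] by simp
qed

context
  fixes G :: "('a, 'b) monoid_scheme" (structure) and phi :: "'a \<Rightarrow> 'a"
  assumes finite_carrier: "finite (carrier G)"
    and bij_phi: "bij_betw phi (carrier G) (carrier G)"
begin

lemma perm_order_pos: "0 < perm_order G phi"
  and funpow_perm_order: "\<forall>x \<in> carrier G. (phi ^^ perm_order G phi) x = x"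
  and perm_order_least:
    "0 < n \<Longrightarrow> n < perm_order G phi \<Longrightarrow> \<not> (\<forall>x \<in> carrier G. (phi ^^ n) x = x)"
proof -
  have "\<exists>n. 0 < n \<and> (\<forall>x \<in> carrier G. (phi ^^ n) x = x)"
    using funpow_periodic_on_finite[OF bij_phi finite_carrier] by blast
  from LeastI_ex[OF this] not_less_Least
  show "0 < perm_order G phi" "\<forall>x \<in> carrier G. (phi ^^ perm_order G phi) x = x"
    "0 < n \<Longrightarrow> n < perm_order G phi \<Longrightarrow> \<not> (\<forall>x \<in> carrier G. (phi ^^ n) x = x)" for n
    unfolding perm_order_def by blast+
qed

lemma funpow_fixes_iff_perm_order_dvd:
  "(\<forall>x \<in> carrier G. (phi ^^ n) x = x) \<longleftrightarrow> perm_order G phi dvd n"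
proof
  let ?m = "perm_order G phi"
  have mult: "\<forall>x \<in> carrier G. (phi ^^ (?m * q)) x = x" for q
    by (induction q) (simp_all add: funpow_add funpow_perm_order)
  show "?m dvd n" if fixes_n: "\<forall>x \<in> carrier G. (phi ^^ n) x = x"
  proof -
    have "(phi ^^ n) x = (phi ^^ (n mod ?m)) ((phi ^^ (?m * (n div ?m))) x)" for x
      by (metis funpow_add o_apply mod_mult_div_eq)
    then have "\<forall>x \<in> carrier G. (phi ^^ (n mod ?m)) x = x"
      using fixes_n mult by simp
    then show ?thesis
      using perm_order_least[of "n mod ?m"] perm_order_pos by (auto simp: dvd_eq_mod_eq_0)
  qed
  show "\<forall>x \<in> carrier G. (phi ^^ n) x = x" if "?m dvd n"
    using that mult by auto
qed

lemma funpow_eq_on_iff_cong: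
  "(\<forall>x \<in> carrier G. (phi ^^ a) x = (phi ^^ b) x) \<longleftrightarrow> [a = b] (mod perm_order G phi)"
proof (cases "a \<le> b")
  case True
  then show ?thesis
    by (simp add: funpow_eq_on_iff_fixes_diff[OF bij_phi] funpow_fixes_iff_perm_order_dvd
        cong_altdef_nat cong_sym_eq[of a])
next
  case False
  have "(\<forall>x \<in> carrier G. (phi ^^ a) x = (phi ^^ b) x)
      \<longleftrightarrow> (\<forall>x \<in> carrier G. (phi ^^ b) x = (phi ^^ a) x)"
    by (auto simp: eq_commute)
  with False show ?thesis
    by (simp add: funpow_eq_on_iff_fixes_diff[OF bij_phi] funpow_fixes_iff_perm_order_dvd
        cong_altdef_nat)
qed

end

lemma derived_power_0 [simp]: "derived_power phi pi x 0 = 0"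
  and derived_power_Suc:
    "derived_power phi pi x (Suc k) = derived_power phi pi x k + pi ((phi ^^ k) x)"
  by (simp_all add: derived_power_def)

context
  fixes G (structure) and phi :: "'a \<Rightarrow> 'a" and pi :: "'a \<Rightarrow> nat"
  assumes skew: "skew_morphism G phi pi"
begin

interpretation group G
  using skew unfolding skew_morphism_def by (elim conjE)

private abbreviation (input) "m \<equiv> perm_order G phi"

private lemma finite_carrier: "finite (carrier G)"
  and bij_phi: "bij_betw phi (carrier G) (carrier G)"
  and phi_one: "phi \<one> = \<one>"
  and phi_mult: "\<And>x y. x \<in> carrier G \<Longrightarrow> y \<in> carrier G \<Longrightarrow>
    phi (x \<otimes> y) = phi x \<otimes> (phi ^^ pi x) y"
  using skew unfolding skew_morphism_def by blast+

private lemma funpow_eq_on_if_cong: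
  "[a = b] (mod m) \<Longrightarrow> x \<in> carrier G \<Longrightarrow> (phi ^^ a) x = (phi ^^ b) x"
  and cong_if_funpow_eq_on:
  "(\<And>x. x \<in> carrier G \<Longrightarrow> (phi ^^ a) x = (phi ^^ b) x) \<Longrightarrow> [a = b] (mod m)"
  using funpow_eq_on_iff_cong[OF finite_carrier bij_phi, of a b] by blast+

private lemma funpow_closed: "x \<in> carrier G \<Longrightarrow> (phi ^^ n) x \<in> carrier G"
  using bij_phi bij_betw_funpow bij_betwE by blast

lemma funpow_skew_mult:
  assumes "x \<in> carrier G" and "y \<in> carrier G"
  shows "(phi ^^ k) (x \<otimes> y) = (phi ^^ k) x \<otimes> (phi ^^ derived_power phi pi x k) y"
proof (induction k)
  case (Suc k)
  have "(phi ^^ Suc k) (x \<otimes> y) = phi ((phi ^^ k) x \<otimes> (phi ^^ derived_power phi pi x k) y)"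
    using Suc by simp
  also have "\<dots> = (phi ^^ Suc k) x \<otimes> (phi ^^ pi ((phi ^^ k) x)) ((phi ^^ derived_power phi pi x k) y)"
    using assms by (simp add: phi_mult funpow_closed)
  also have "\<dots> = (phi ^^ Suc k) x \<otimes> (phi ^^ derived_power phi pi x (Suc k)) y"
    by (metis derived_power_Suc add.commute comp_apply funpow_add)
  finally show ?case .
qed simp

lemma derived_power_one_cong: "[derived_power phi pi \<one> k = k] (mod m)"
proof -
  have "(phi ^^ k) \<one> = \<one>"
    by (induction k) (simp_all add: phi_one)
  then have "(phi ^^ derived_power phi pi \<one> k) y = (phi ^^ k) y" if "y \<in> carrier G" for y
    using funpow_skew_mult[of \<one> y k] that by (simp add: funpow_closed)
  then show ?thesis
    by (rule cong_if_funpow_eq_on)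
qed

lemma derived_power_cong:
  assumes x: "x \<in> carrier G" and "[k1 = k2] (mod m)"
  shows "[derived_power phi pi x k1 = derived_power phi pi x k2] (mod m)"
proof -
  have "(phi ^^ derived_power phi pi x k1) y = (phi ^^ derived_power phi pi x k2) y"
    if y: "y \<in> carrier G" for y
  proof -
    have "(phi ^^ k1) (x \<otimes> y) = (phi ^^ k2) (x \<otimes> y)" and "(phi ^^ k1) x = (phi ^^ k2) x"
      using funpow_eq_on_if_cong[OF assms(2)] x y by simp_all
    then have "(phi ^^ k1) x \<otimes> (phi ^^ derived_power phi pi x k1) y
        = (phi ^^ k1) x \<otimes> (phi ^^ derived_power phi pi x k2) y"
      using funpow_skew_mult[OF x y, of k1] funpow_skew_mult[OF x y, of k2] by simp
    then show ?thesis
      using x y by (simp add: funpow_closed)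
  qed
  then show ?thesis
    by (rule cong_if_funpow_eq_on)
qed

lemma derived_power_cong_iff:
  "(\<forall>x \<in> carrier G. [derived_power phi pi x k1 = derived_power phi pi x k2] (mod m))
    \<longleftrightarrow> [k1 = k2] (mod m)"
proof
  assume "\<forall>x \<in> carrier G. [derived_power phi pi x k1 = derived_power phi pi x k2] (mod m)"
  then have "[derived_power phi pi \<one> k1 = derived_power phi pi \<one> k2] (mod m)"
    by simp
  then show "[k1 = k2] (mod m)"
    using derived_power_one_cong cong_sym cong_trans by metis
qed (use derived_power_cong in blast)

lemma derived_power_mult_cong:
  assumes x: "x \<in> carrier G" and y: "y \<in> carrier G"
  shows "[derived_power phi pi (x \<otimes> y) k
      = derived_power phi pi y (derived_power phi pi x k)] (mod m)"
proof -
  let ?s = "derived_power phi pi x k"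
  have "(phi ^^ derived_power phi pi (x \<otimes> y) k) z = (phi ^^ derived_power phi pi y ?s) z"
    if z: "z \<in> carrier G" for z
  proof -
    have "(phi ^^ k) x \<otimes> (phi ^^ ?s) y \<otimes> (phi ^^ derived_power phi pi (x \<otimes> y) k) z
        = (phi ^^ k) (x \<otimes> y \<otimes> z)"
      using funpow_skew_mult[of "x \<otimes> y" z k] funpow_skew_mult[OF x y, of k] x y z by simp
    also have "\<dots> = (phi ^^ k) (x \<otimes> (y \<otimes> z))"
      using x y z by (simp add: m_assoc)
    also have "\<dots> = (phi ^^ k) x \<otimes> ((phi ^^ ?s) y \<otimes> (phi ^^ derived_power phi pi y ?s) z)"
      using funpow_skew_mult[of x "y \<otimes> z" k] funpow_skew_mult[OF y z, of ?s] x y z by simp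
    finally show ?thesis
      using x y z by (simp add: m_assoc funpow_closed)
  qed
  then show ?thesis
    by (rule cong_if_funpow_eq_on)
qed

end

theorem proposition2p4:
  fixes G (structure) and phi :: "'a \<Rightarrow> 'a" and pi :: "'a \<Rightarrow> nat" and m :: nat
  assumes "skew_morphism G phi pi"
    and "m = perm_order G phi"
  shows "(\<forall>x \<in> carrier G. \<forall>y \<in> carrier G. \<forall>k j.
            [j = derived_power phi pi x k] (mod m) \<longrightarrow>
            [derived_power phi pi (x \<otimes> y) k = derived_power phi pi y j] (mod m))
       \<and> (\<forall>k. (\<forall>x \<in> carrier G. [derived_power phi pi x k = 0] (mod m)) \<longleftrightarrow> m dvd k)
       \<and> (\<forall>x \<in> carrier G. \<forall>q r.
            [derived_power phi pi x (m * q + r) = derived_power phi pi x r] (mod m))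
       \<and> (\<forall>k1 k2. (\<forall>x \<in> carrier G.
              [derived_power phi pi x k1 = derived_power phi pi x k2] (mod m))
            \<longleftrightarrow> [k1 = k2] (mod m))"
proof -
  note cong_iff = derived_power_cong_iff[OF assms(1), folded assms(2)]
  have a: "[derived_power phi pi (x \<otimes> y) k = derived_power phi pi y j] (mod m)"
    if "x \<in> carrier G" "y \<in> carrier G" "[j = derived_power phi pi x k] (mod m)" for x y k j
    using cong_trans[OF derived_power_mult_cong[OF assms(1) that(1,2)]
        derived_power_cong[OF assms(1) that(2) cong_sym[OF that(3)[unfolded assms(2)]]]] assms(2)
    by simp
  have b: "(\<forall>x \<in> carrier G. [derived_power phi pi x k = 0] (mod m)) \<longleftrightarrow> m dvd k" for k
    using cong_iff[of k 0] by (simp add: cong_0_iff)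
  have c: "[derived_power phi pi x (m * q + r) = derived_power phi pi x r] (mod m)"
    if "x \<in> carrier G" for x q r
    using cong_iff[of "m * q + r" r] that by (simp add: cong_def)
  show ?thesis
    by (intro conjI allI ballI impI a b c cong_iff)
qed

end
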